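(* Let $q_i=(\mathbf A_i,\mathbf b_i)\in Q$, $i=1,2,3$, be the vertices of a non-degenerate horizontal (open) 3-gon, i.e., the lines $q_1q_2$ and $q_2q_3$ are horizontal and $q_1,q_2,q_3$ are non-collinear. Then the projected pair of inscribed 3-gons with vertices $A_i=[\mathbf A_i]$ and edges $b_i=[\mathbf b_i]$ satisfies $$[A_2,B_1,A_1,D]+[B_2,A_2,C,A_3]=0,$$ where $B_1=b_1\cap b_2$, $B_2=b_2\cap b_3$, $C=b_1\cap a_2$, $D=a_1\cap b_2$, $a_i$ the line $A_iA_{i+1}$. Conversely, every non-degenerate inscribed pair of 3-gons satisfying this equation lifts uniquely to a horizontal 3-gon in $Q$.
   Context: $Q:=\{(\mathbf A,\mathbf b)\in\mathbb R^3\times(\mathbb R^3)^*:\mathbf b\mathbf A=1\}$ ($\mathbf A$ column, $\mathbf b$ row). For $\mathbf A,\mathbf A'\in\mathbb R^3$, $\mathbf A\times\mathbf A':=\det(\mathbf A,\mathbf A',\cdot)\in(\mathbb R^3)^*$. The distribution $\mathscr D$ at $(\mathbf A,\mathbf b)$: vectors with $\dot{\mathbf b}\mathbf A+\mathbf b\dot{\mathbf A}=0$, $\dot{\mathbf b}=\mathbf A\times\dot{\mathbf A}$. A line is horizontal if it is an affine line in $Q$ everywhere tangent to $\mathscr D$. $[\mathbf A]$ is the point of $\mathbb{RP}^2$ with homogeneous coordinates $\mathbf A$, $[\mathbf b]$ the line $\{X:\mathbf bX=0\}$. The pair of 3-gons (points $A_1,A_2,A_3$, lines $b_1,b_2,b_3$)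 is inscribed if $b_i\cap b_{i+1}\in A_iA_{i+1}$ for $i=1,2$; non-degenerate if $A_i\notin b_i$, $A_1,A_2,A_3$ are non-collinear and $b_1,b_2,b_3$ are non-concurrent. Cross-ratio of collinear points: $[P_1,P_2,P_3,P_4]=\frac{(x_1-x_3)(x_2-x_4)}{(x_1-x_4)(x_2-x_3)}$ in an affine coordinate on the line. Lifting means finding points of $Q$ over the given points and lines. *)

theory Defs
  imports "HOL-Analysis.Analysis"
begin

text \<open>A column vector A and a row covector b of R^3 are both
  modelled as elements of real^3; the pairing b A is the inner product b \<bullet> A, and
  det(A, A', .) is identified with the covector cross3 A A' (since det(A,A',X) = (A x A') . X).\<close>

definition inQ :: "real^3 \<Rightarrow> real^3 \<Rightarrow> bool" where
  "inQ A b \<longleftrightarrow> b \<bullet> A = 1"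

definition in_distrib :: "real^3 \<Rightarrow> real^3 \<Rightarrow> real^3 \<Rightarrow> real^3 \<Rightarrow> bool" where
  "in_distrib A b dA db \<longleftrightarrow> db \<bullet> A + b \<bullet> dA = 0 \<and> db = cross3 A dA"

definition horizontal_line :: "((real^3) \<times> (real^3)) \<Rightarrow> ((real^3) \<times> (real^3)) \<Rightarrow> bool" where
  "horizontal_line q q' \<longleftrightarrow> q \<noteq> q' \<and>
     (\<forall>t::real. inQ (fst (q + t *\<^sub>R (q' - q))) (snd (q + t *\<^sub>R (q' - q))) \<and>
        in_distrib (fst (q + t *\<^sub>R (q' - q))) (snd (q + t *\<^sub>R (q' - q)))
                   (fst (q' - q)) (snd (q' - q)))"

definition on_line :: "real^3 \<Rightarrow> real^3 \<Rightarrow> bool" where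
  "on_line X l \<longleftrightarrow> l \<bullet> X = 0"

definition meet :: "real^3 \<Rightarrow> real^3 \<Rightarrow> real^3" where
  "meet l m = cross3 l m"

definition join :: "real^3 \<Rightarrow> real^3 \<Rightarrow> real^3" where
  "join P P' = cross3 P P'"

text \<open>For p_i = s_i u + t_i v in a basis u, v of the plane of the line one has
  p_i x p_j = (s_i t_j - s_j t_i) (u x v), so this equals
  (x1-x3)(x2-x4)/((x1-x4)(x2-x3)) for the affine coordinate x_i = s_i/t_i.\<close>
definition cross_ratio :: "real^3 \<Rightarrow> real^3 \<Rightarrow> real^3 \<Rightarrow> real^3 \<Rightarrow> real" where
  "cross_ratio p1 p2 p3 p4 =
     ((cross3 p1 p3) \<bullet> (cross3 p2 p4)) / ((cross3 p1 p4) \<bullet> (cross3 p2 p3))"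

definition inscribed :: "real^3 \<Rightarrow> real^3 \<Rightarrow> real^3 \<Rightarrow> real^3 \<Rightarrow> real^3 \<Rightarrow> real^3 \<Rightarrow> bool" where
  "inscribed P1 P2 P3 l1 l2 l3 \<longleftrightarrow>
     on_line (meet l1 l2) (join P1 P2) \<and> on_line (meet l2 l3) (join P2 P3)"

definition nondegenerate :: "real^3 \<Rightarrow> real^3 \<Rightarrow> real^3 \<Rightarrow> real^3 \<Rightarrow> real^3 \<Rightarrow> real^3 \<Rightarrow> bool" where
  "nondegenerate P1 P2 P3 l1 l2 l3 \<longleftrightarrow>
     \<not> on_line P1 l1 \<and> \<not> on_line P2 l2 \<and> \<not> on_line P3 l3 \<and>
     det (vector [P1, P2, P3]) \<noteq> 0 \<and>
     det (vector [l1, l2, l3]) \<noteq> 0"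

text \<open>The cross-ratio equation [A2,B1,A1,D] + [B2,A2,C,A3] = 0 with
  B1 = b1 meet b2, B2 = b2 meet b3, a1 = A1A2, a2 = A2A3, C = b1 meet a2, D = a1 meet b3.\<close>
definition cr_equation :: "real^3 \<Rightarrow> real^3 \<Rightarrow> real^3 \<Rightarrow> real^3 \<Rightarrow> real^3 \<Rightarrow> real^3 \<Rightarrow> bool" where
  "cr_equation P1 P2 P3 l1 l2 l3 \<longleftrightarrow>
     cross_ratio P2 (meet l1 l2) P1 (meet (join P1 P2) l3)
   + cross_ratio (meet l2 l3) P2 (meet l1 (join P2 P3)) P3 = 0"

definition lies_over :: "real^3 \<Rightarrow> real^3 \<Rightarrow> real^3 \<Rightarrow> real^3 \<Rightarrow> bool" where
  "lies_over A b P l \<longleftrightarrow> inQ A b \<and> (\<exists>c. c \<noteq> 0 \<and> A = c *\<^sub>R P) \<and> (\<exists>c. c \<noteq> 0 \<and> b = c *\<^sub>R l)"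

end

theory Submission
  imports Defs
begin

(* Horizontality of the edge from (A, b) to (A', b') means b A = b A' = 1 and b' = b + A \<times> A'.
   Allowing more generally b3 = b2 + k (A2 \<times> A3) on the second edge, both cross-ratios can be
   computed in closed form: with d = det(A1, A2, A3) they are -k d and d. So a horizontal 3-gon
   (k = 1) satisfies the equation, and it is inscribed because b_i A_j = 1 for |i - j| \<le> 1.

   Conversely, write A1 = c P1. Normalising b1 and A2 and requiring b2 = b1 + A1 \<times> A2 to be a
   multiple of l2 gives a cubic c^3 = K with K \<noteq> 0, which has exactly one real root. After that
   A3 is forced by normalisation, and the lift of l3 normalised on A2 (hence, by inscribedness,
   also on A3) is b2 + k (A2 \<times> A3) with k \<noteq> 0; the cross-ratio equation, which reads
   (1 - k) d = 0, forces k = 1. *)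

unbundle cross3_syntax

lemma inner_cross_self_left: "(x \<times> y) \<bullet> x = 0"
  by (simp add: cross3_simps)

declare dot_cross_self [simp] inner_cross_self_left [simp]

lemma cross_cross_left: "(a \<times> b) \<times> c = (a \<bullet> c) *\<^sub>R b - (b \<bullet> c) *\<^sub>R a"
  by (simp add: cross_skew[of "a \<times> b"] Lagrange inner_commute)

lemma cramer_cross3:
  "(a \<bullet> (b \<times> c)) *\<^sub>R v = (v \<bullet> (b \<times> c)) *\<^sub>R a + (a \<bullet> (v \<times> c)) *\<^sub>R b + (a \<bullet> (b \<times> v)) *\<^sub>R c"
  unfolding vec_eq_iff forall_3 by (simp add: cross3_def inner_vec_def sum_3 algebra_simps)

lemma dual_cramer_cross3:
  "(a \<bullet> (b \<times> c)) *\<^sub>R v = (v \<bullet> a) *\<^sub>R (b \<times> c) + (v \<bullet> b) *\<^sub>R (c \<times> a) + (v \<bullet> c) *\<^sub>R (a \<times> b)"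
  unfolding vec_eq_iff forall_3 by (simp add: cross3_def inner_vec_def sum_3 algebra_simps)

lemma parallel_cross_if_orthogonal:
  assumes "a \<bullet> (b \<times> c) \<noteq> 0" and "v \<bullet> b = 0" and "v \<bullet> c = 0"
  obtains t where "v = t *\<^sub>R (b \<times> c)"
proof
  show "v = ((v \<bullet> a) / (a \<bullet> (b \<times> c))) *\<^sub>R (b \<times> c)"
    using dual_cramer_cross3[of a b c v] assms by (simp add: eq_vector_fraction_iff)
qed

lemma parallel_if_orthogonal_crosses:
  assumes "a \<bullet> (b \<times> c) \<noteq> 0" and "v \<bullet> (a \<times> b) = 0" and "v \<bullet> (b \<times> c) = 0"
  obtains t where "v = t *\<^sub>R b"
proof
  have "a \<bullet> (b \<times> v) = 0"
    using assms(2) by (metis cross_triple inner_commute)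
  then show "v = ((a \<bullet> (v \<times> c)) / (a \<bullet> (b \<times> c))) *\<^sub>R b"
    using cramer_cross3[of a b c v] assms by (simp add: eq_vector_fraction_iff)
qed

lemma eq_if_multiples_inner_eq_one:
  assumes "\<exists>c. x = c *\<^sub>R P" and "\<exists>c. x' = c *\<^sub>R P" and "b \<bullet> x = 1" and "b \<bullet> x' = 1"
  shows "x = x'"
proof -
  obtain c c' where x: "x = c *\<^sub>R P" and x': "x' = c' *\<^sub>R P"
    using assms(1,2) by blast
  have "c * (b \<bullet> P) = c' * (b \<bullet> P)" and "b \<bullet> P \<noteq> 0"
    using assms(3,4) by (auto simp: x x')
  then show ?thesis
    by (simp add: x x')
qed

lemma normalized_covectors_differ_by_cross:
  assumes "A \<times> A' \<noteq> 0" and "b \<bullet> A = 1" and "b \<bullet> A' = 1" and "b' \<bullet> A = 1" and "b' \<bullet> A' = 1"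
  obtains k where "b' = b + k *\<^sub>R (A \<times> A')"
proof -
  have "(A \<times> A') \<bullet> (A \<times> A') \<noteq> 0" and "(b' - b) \<bullet> A = 0" and "(b' - b) \<bullet> A' = 0"
    using assms by (simp_all add: inner_diff_left)
  then obtain k where "b' - b = k *\<^sub>R (A \<times> A')"
    by (rule parallel_cross_if_orthogonal)
  then have "b' = b + k *\<^sub>R (A \<times> A')"
    by (simp add: algebra_simps)
  then show thesis
    by (rule that)
qed

lemma on_line_meet_join_iff:
  "on_line (meet l m) (join P P') \<longleftrightarrow> (l \<bullet> P) * (m \<bullet> P') = (l \<bullet> P') * (m \<bullet> P)"
  unfolding on_line_def meet_def join_def dot_cross by (simp add: inner_commute mult.commute)

lemma meet_scaleR: "meet (a *\<^sub>R l) (b *\<^sub>R m) = (a * b) *\<^sub>R meet l m"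
  unfolding meet_def by (simp add: cross_mult_left cross_mult_right)

lemma join_scaleR: "join (a *\<^sub>R P) (b *\<^sub>R P') = (a * b) *\<^sub>R join P P'"
  unfolding join_def by (simp add: cross_mult_left cross_mult_right)

lemma cross_ratio_scaleR:
  assumes "a \<noteq> 0" "b \<noteq> 0" "c \<noteq> 0" "d \<noteq> 0"
  shows "cross_ratio (a *\<^sub>R p1) (b *\<^sub>R p2) (c *\<^sub>R p3) (d *\<^sub>R p4) = cross_ratio p1 p2 p3 p4"
proof -
  have "cross_ratio (a *\<^sub>R p1) (b *\<^sub>R p2) (c *\<^sub>R p3) (d *\<^sub>R p4) =
      ((a * b * c * d) * ((p1 \<times> p3) \<bullet> (p2 \<times> p4))) / ((a * b * c * d) * ((p1 \<times> p4) \<bullet> (p2 \<times> p3)))"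
    unfolding cross_ratio_def by (simp add: cross_mult_left cross_mult_right algebra_simps)
  then show ?thesis
    unfolding cross_ratio_def using assms by simp
qed

lemma inscribed_scaleR:
  assumes "a1 \<noteq> 0" "a2 \<noteq> 0" "a3 \<noteq> 0" "e1 \<noteq> 0" "e2 \<noteq> 0" "e3 \<noteq> 0"
  shows "inscribed (a1 *\<^sub>R P1) (a2 *\<^sub>R P2) (a3 *\<^sub>R P3) (e1 *\<^sub>R l1) (e2 *\<^sub>R l2) (e3 *\<^sub>R l3)
       \<longleftrightarrow> inscribed P1 P2 P3 l1 l2 l3"
  unfolding inscribed_def on_line_def meet_scaleR join_scaleR using assms by simp

lemma cr_equation_scaleR:
  assumes "a1 \<noteq> 0" "a2 \<noteq> 0" "a3 \<noteq> 0" "e1 \<noteq> 0" "e2 \<noteq> 0" "e3 \<noteq> 0"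
  shows "cr_equation (a1 *\<^sub>R P1) (a2 *\<^sub>R P2) (a3 *\<^sub>R P3) (e1 *\<^sub>R l1) (e2 *\<^sub>R l2) (e3 *\<^sub>R l3)
       \<longleftrightarrow> cr_equation P1 P2 P3 l1 l2 l3"
  unfolding cr_equation_def meet_scaleR join_scaleR using assms by (simp add: cross_ratio_scaleR)

lemma nondegenerate_iff:
  "nondegenerate P1 P2 P3 l1 l2 l3 \<longleftrightarrow>
     l1 \<bullet> P1 \<noteq> 0 \<and> l2 \<bullet> P2 \<noteq> 0 \<and> l3 \<bullet> P3 \<noteq> 0 \<and>
     P1 \<bullet> (P2 \<times> P3) \<noteq> 0 \<and> l1 \<bullet> (l2 \<times> l3) \<noteq> 0"
  unfolding nondegenerate_def on_line_def dot_cross_det ..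

lemma inscribed_nondegenerate_inner_nonzero:
  assumes "nondegenerate P1 P2 P3 l1 l2 l3" and "inscribed P1 P2 P3 l1 l2 l3"
  shows "l1 \<bullet> P2 \<noteq> 0" and "l2 \<bullet> P1 \<noteq> 0" and "l2 \<bullet> P3 \<noteq> 0" and "l3 \<bullet> P2 \<noteq> 0"
proof -
  have "(l1 \<bullet> P1) * (l2 \<bullet> P2) = (l1 \<bullet> P2) * (l2 \<bullet> P1)"
    and "(l2 \<bullet> P2) * (l3 \<bullet> P3) = (l2 \<bullet> P3) * (l3 \<bullet> P2)"
    using assms(2) unfolding inscribed_def on_line_meet_join_iff by simp_all
  with assms(1) show "l1 \<bullet> P2 \<noteq> 0" "l2 \<bullet> P1 \<noteq> 0" "l2 \<bullet> P3 \<noteq> 0" "l3 \<bullet> P2 \<noteq> 0"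
    unfolding nondegenerate_iff by auto
qed

lemma inscribed_nondegenerate_cross_inner_nonzero:
  assumes nd: "nondegenerate P1 P2 P3 l1 l2 l3" and ins: "inscribed P1 P2 P3 l1 l2 l3"
  shows "(P1 \<times> P2) \<bullet> (l2 \<times> l3) \<noteq> 0"
proof
  assume "(P1 \<times> P2) \<bullet> (l2 \<times> l3) = 0"
  moreover have "(P1 \<times> P2) \<bullet> (l1 \<times> l2) = 0"
    using ins unfolding inscribed_def on_line_def meet_def join_def by simp
  moreover have "l1 \<bullet> (l2 \<times> l3) \<noteq> 0"
    using nd unfolding nondegenerate_iff by simp
  ultimately obtain t where t: "P1 \<times> P2 = t *\<^sub>R l2"
    using parallel_if_orthogonal_crosses by blast
  then have "t * (l2 \<bullet> P1) = 0"
    by (metis inner_cross_self_left inner_scaleR_left)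
  then have "P1 \<times> P2 = 0"
    using t inscribed_nondegenerate_inner_nonzero(2)[OF nd ins] by simp
  then have "P1 \<bullet> (P2 \<times> P3) = 0"
    by (metis cross_triple inner_commute inner_zero_left)
  with nd show False
    unfolding nondegenerate_iff by simp
qed

lemma horizontal_line_iff:
  "horizontal_line (A, b) (A', b') \<longleftrightarrow>
     (A, b) \<noteq> (A', b') \<and> b \<bullet> A = 1 \<and> b \<bullet> A' = 1 \<and> b' = b + A \<times> A'"
proof
  assume "horizontal_line (A, b) (A', b')"
  then have ne: "(A, b) \<noteq> (A', b')" and "inQ A b" and "in_distrib A b (A' - A) (b' - b)"
    unfolding horizontal_line_def by (auto dest: spec[of _ 0])
  then have bA: "b \<bullet> A = 1" and db: "b' - b = A \<times> A'" and "(b' - b) \<bullet> A + b \<bullet> (A' - A) = 0"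
    by (auto simp: in_distrib_def inQ_def Cross3.right_diff_distrib)
  then have "b \<bullet> A' = b \<bullet> A"
    by (simp add: inner_diff_right)
  with ne bA db show "(A, b) \<noteq> (A', b') \<and> b \<bullet> A = 1 \<and> b \<bullet> A' = 1 \<and> b' = b + A \<times> A'"
    by (auto simp: algebra_simps)
next
  assume h: "(A, b) \<noteq> (A', b') \<and> b \<bullet> A = 1 \<and> b \<bullet> A' = 1 \<and> b' = b + A \<times> A'"
  have "(A + t *\<^sub>R (A' - A)) \<times> (A' - A) = A \<times> A'" for t
    by (simp add: cross_add_left cross_mult_left Cross3.right_diff_distrib
        Cross3.left_diff_distrib cross_skew[of A' A])
  moreover have "A \<noteq> A'"
    using h by auto
  ultimately show "horizontal_line (A, b) (A', b')"
    using h unfolding horizontal_line_def inQ_def in_distrib_def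
    by (simp add: algebra_simps)
qed

lemma horizontal_line_cross_nonzero:
  assumes "horizontal_line (A, b) (A', b')"
  shows "A \<times> A' \<noteq> 0"
proof
  assume "A \<times> A' = 0"
  have ne: "(A, b) \<noteq> (A', b')" and bA: "b \<bullet> A = 1" "b \<bullet> A' = 1" and b': "b' = b + A \<times> A'"
    using assms unfolding horizontal_line_iff by blast+
  from \<open>A \<times> A' = 0\<close> obtain c where "A' = c *\<^sub>R A"
    using bA by (auto simp: cross_eq_0 collinear_lemma)
  then have "A' = A"
    using bA eq_if_multiples_inner_eq_one[of A' A A b] by (metis scaleR_one)
  with ne b' show False by simp
qed

lemma cross_ratios_scaled_second_edge:
  assumes b1A1: "b1 \<bullet> A1 = 1" and b1A2: "b1 \<bullet> A2 = 1" and b2: "b2 = b1 + A1 \<times> A2"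
    and b2A3: "b2 \<bullet> A3 = 1" and b3: "b3 = b2 + k *\<^sub>R (A2 \<times> A3)"
    and N_nz: "A1 \<times> A2 \<noteq> 0" and M_nz: "A2 \<times> A3 \<noteq> 0" and k_nz: "k \<noteq> 0"
  shows "cross_ratio A2 (meet b1 b2) A1 (meet (join A1 A2) b3) = - k * (A1 \<bullet> (A2 \<times> A3))"
    and "cross_ratio (meet b2 b3) A2 (meet b1 (join A2 A3)) A3 = A1 \<bullet> (A2 \<times> A3)"
proof -
  define N M d where "N = A1 \<times> A2" and "M = A2 \<times> A3" and "d = A1 \<bullet> (A2 \<times> A3)"
  have b2A1: "b2 \<bullet> A1 = 1" and b2A2: "b2 \<bullet> A2 = 1"
    using b1A1 b1A2 by (simp_all add: b2 inner_add_left)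
  have N_A3: "N \<bullet> A3 = d" and M_A1: "M \<bullet> A1 = d"
    unfolding N_def M_def d_def by (metis cross_triple inner_commute)+
  have b1A3: "b1 \<bullet> A3 = 1 - d"
    using b2A3 N_A3 by (simp add: b2 N_def inner_add_left)
  have b3A1: "b3 \<bullet> A1 = 1 + k * d" and b3A2: "b3 \<bullet> A2 = 1" and b3A3: "b3 \<bullet> A3 = 1"
    using b2A1 b2A2 b2A3 M_A1 by (simp_all add: b3 M_def inner_add_left)
  have b2_b1: "b2 - b1 = N" and b3_b2: "b3 - b2 = k *\<^sub>R M"
    by (simp_all add: b2 b3 N_def M_def)
  define D where "D = meet (join A1 A2) b3"
  have D: "D = (1 + k * d) *\<^sub>R A2 - A1"
    unfolding D_def meet_def join_def cross_cross_left using b3A1 b3A2 by (simp add: inner_commute)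
  have "(b1 \<times> b2) \<times> D = (k * d) *\<^sub>R N"
    unfolding cross_cross_left D b2_b1[symmetric] using b1A1 b1A2 b2A1 b2A2
    by (simp add: algebra_simps)
  moreover have "(b1 \<times> b2) \<times> A1 = N"
    unfolding cross_cross_left b2_b1[symmetric] using b1A1 b2A1 by simp
  moreover have "A2 \<times> D = N" and "A2 \<times> A1 = - N"
    unfolding D N_def by (simp_all add: Cross3.right_diff_distrib cross_mult_right cross_skew[of A2 A1])
  ultimately show "cross_ratio A2 (meet b1 b2) A1 D = - k * d"
    using N_nz unfolding cross_ratio_def meet_def[of b1 b2] N_def by simp
  define C where "C = meet b1 (join A2 A3)"
  have C: "C = (1 - d) *\<^sub>R A2 - A3"
    unfolding C_def meet_def join_def Lagrange using b1A2 b1A3 by simp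
  have "b2 \<bullet> C = - d" and "b3 \<bullet> C = - d"
    using b2A2 b2A3 b3A2 b3A3 by (simp_all add: C inner_diff_right algebra_simps)
  then have "(b2 \<times> b3) \<times> C = (- d) *\<^sub>R (b3 - b2)"
    unfolding cross_cross_left by (simp add: inner_commute algebra_simps)
  then have "(b2 \<times> b3) \<times> C = (- d * k) *\<^sub>R M"
    unfolding b3_b2 by simp
  moreover have "(b2 \<times> b3) \<times> A3 = k *\<^sub>R M"
    unfolding cross_cross_left using b2A3 b3A3 b3_b2 by simp
  moreover have "A2 \<times> C = - M"
    unfolding C M_def by (simp add: Cross3.right_diff_distrib cross_mult_right)
  ultimately show "cross_ratio (meet b2 b3) A2 C A3 = d"
    using M_nz k_nz unfolding cross_ratio_def meet_def[of b2 b3] M_def by simp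
qed

lemma cr_equation_scaled_second_edge_iff:
  assumes "b1 \<bullet> A1 = 1" and "b1 \<bullet> A2 = 1" and "b2 = b1 + A1 \<times> A2"
    and "b2 \<bullet> A3 = 1" and "b3 = b2 + k *\<^sub>R (A2 \<times> A3)"
    and "A1 \<times> A2 \<noteq> 0" and "A2 \<times> A3 \<noteq> 0" and "k \<noteq> 0"
  shows "cr_equation A1 A2 A3 b1 b2 b3 \<longleftrightarrow> k = 1 \<or> A1 \<bullet> (A2 \<times> A3) = 0"
proof -
  have "cr_equation A1 A2 A3 b1 b2 b3 \<longleftrightarrow> (1 - k) * (A1 \<bullet> (A2 \<times> A3)) = 0"
    unfolding cr_equation_def cross_ratios_scaled_second_edge[OF assms] by (simp add: algebra_simps)
  then show ?thesis by simp
qed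

lemma inscribed_cr_equation_if_horizontal:
  assumes h12: "horizontal_line (A1, b1) (A2, b2)" and h23: "horizontal_line (A2, b2) (A3, b3)"
  shows "inscribed A1 A2 A3 b1 b2 b3" and "cr_equation A1 A2 A3 b1 b2 b3"
proof -
  have b1A1: "b1 \<bullet> A1 = 1" and b1A2: "b1 \<bullet> A2 = 1" and b2: "b2 = b1 + A1 \<times> A2"
    and b2A2: "b2 \<bullet> A2 = 1" and b2A3: "b2 \<bullet> A3 = 1" and b3: "b3 = b2 + A2 \<times> A3"
    using h12 h23 unfolding horizontal_line_iff by blast+
  have "b2 \<bullet> A1 = 1" and "b3 \<bullet> A2 = 1" and "b3 \<bullet> A3 = 1"
    using b1A1 b2A2 b2A3 by (simp_all add: b2 b3 inner_add_left)
  with b1A1 b1A2 b2A2 b2A3 show "inscribed A1 A2 A3 b1 b2 b3"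
    unfolding inscribed_def on_line_meet_join_iff by simp
  have "b3 = b2 + 1 *\<^sub>R (A2 \<times> A3)"
    using b3 by simp
  from cr_equation_scaled_second_edge_iff[OF b1A1 b1A2 b2 b2A3 this]
  show "cr_equation A1 A2 A3 b1 b2 b3"
    using horizontal_line_cross_nonzero[OF h12] horizontal_line_cross_nonzero[OF h23] by simp
qed

definition horizontal_lift ::
    "real^3 \<Rightarrow> real^3 \<Rightarrow> real^3 \<Rightarrow> real^3 \<Rightarrow> real^3 \<Rightarrow> real^3 \<Rightarrow>
     real^3 \<Rightarrow> real^3 \<Rightarrow> real^3 \<Rightarrow> real^3 \<Rightarrow> real^3 \<Rightarrow> real^3 \<Rightarrow> bool" where
  "horizontal_lift P1 P2 P3 l1 l2 l3 A1 b1 A2 b2 A3 b3 \<longleftrightarrow>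
     lies_over A1 b1 P1 l1 \<and> lies_over A2 b2 P2 l2 \<and> lies_over A3 b3 P3 l3 \<and>
     horizontal_line (A1, b1) (A2, b2) \<and> horizontal_line (A2, b2) (A3, b3)"

(* The line l3 is arbitrary: it only serves to test that b2 is a multiple of l2. *)
lemma horizontal_edge_lift_cubic:
  assumes "lies_over A1 b1 P1 l1" and "lies_over A2 b2 P2 l2" and "horizontal_line (A1, b1) (A2, b2)"
  obtains c where "A1 = c *\<^sub>R P1"
    and "c ^ 3 * ((l1 \<bullet> P1)\<^sup>2 * ((P1 \<times> P2) \<bullet> (l2 \<times> l3))) = - (l1 \<bullet> P2) * (l1 \<bullet> (l2 \<times> l3))"
proof -
  obtain c1 c2 e1 e2 where A1: "A1 = c1 *\<^sub>R P1" and A2: "A2 = c2 *\<^sub>R P2"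
    and b1: "b1 = e1 *\<^sub>R l1" and b2: "b2 = e2 *\<^sub>R l2"
    using assms(1,2) unfolding lies_over_def by blast
  have b1A1: "b1 \<bullet> A1 = 1" and b1A2: "b1 \<bullet> A2 = 1" and b2_eq: "b2 = b1 + A1 \<times> A2"
    using assms(3) unfolding horizontal_line_iff by blast+
  have "b2 \<bullet> (l2 \<times> l3) = 0"
    by (simp add: b2)
  then have "e1 * (l1 \<bullet> (l2 \<times> l3)) + c1 * c2 * ((P1 \<times> P2) \<bullet> (l2 \<times> l3)) = 0"
    by (simp add: b2_eq A1 A2 b1 inner_add_left cross_mult_left cross_mult_right mult.commute)
  moreover have "e1 * c1 * (l1 \<bullet> P1) = 1" and "e1 * c2 * (l1 \<bullet> P2) = 1"
    using b1A1 b1A2 by (simp_all add: A1 A2 b1 algebra_simps)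
  ultimately have
    "c1 ^ 3 * ((l1 \<bullet> P1)\<^sup>2 * ((P1 \<times> P2) \<bullet> (l2 \<times> l3))) = - (l1 \<bullet> P2) * (l1 \<bullet> (l2 \<times> l3))"
    by algebra
  with A1 show thesis
    using that by blast
qed

lemma horizontal_lift_unique:
  assumes nz: "l1 \<bullet> P2 \<noteq> 0" "l1 \<bullet> (l2 \<times> l3) \<noteq> 0"
    and lift: "horizontal_lift P1 P2 P3 l1 l2 l3 A1 b1 A2 b2 A3 b3"
    and lift': "horizontal_lift P1 P2 P3 l1 l2 l3 A1' b1' A2' b2' A3' b3'"
  shows "(A1, b1, A2, b2, A3, b3) = (A1', b1', A2', b2', A3', b3')"
proof -
  define K where "K = (l1 \<bullet> P1)\<^sup>2 * ((P1 \<times> P2) \<bullet> (l2 \<times> l3))"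
  obtain c c' where A1: "A1 = c *\<^sub>R P1" and A1': "A1' = c' *\<^sub>R P1"
    and "c ^ 3 * K = - (l1 \<bullet> P2) * (l1 \<bullet> (l2 \<times> l3))"
    and "c' ^ 3 * K = - (l1 \<bullet> P2) * (l1 \<bullet> (l2 \<times> l3))"
    using lift lift' horizontal_edge_lift_cubic unfolding horizontal_lift_def K_def by metis
  with nz have "c ^ 3 = c' ^ 3"
    by (metis mult_cancel_right mult_eq_0_iff neg_equal_0_iff_equal)
  then have "root 3 (c ^ 3) = root 3 (c' ^ 3)"
    by simp
  then have eq_A1: "A1 = A1'"
    by (simp add: A1 A1' odd_real_root_power_cancel)
  from lift lift' have over: "\<exists>c. A2 = c *\<^sub>R P2" "\<exists>c. A3 = c *\<^sub>R P3"
      "\<exists>c. A2' = c *\<^sub>R P2" "\<exists>c. A3' = c *\<^sub>R P3"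
      "\<exists>c. b1 = c *\<^sub>R l1" "\<exists>c. b1' = c *\<^sub>R l1"
    and pair: "A1 \<bullet> b1 = 1" "A1' \<bullet> b1' = 1" "b1 \<bullet> A2 = 1" "b1' \<bullet> A2' = 1" "b2 \<bullet> A3 = 1" "b2' \<bullet> A3' = 1"
    and edges: "b2 = b1 + A1 \<times> A2" "b3 = b2 + A2 \<times> A3" "b2' = b1' + A1' \<times> A2'" "b3' = b2' + A2' \<times> A3'"
    unfolding horizontal_lift_def lies_over_def horizontal_line_iff inQ_def
    by (auto simp: inner_commute)
  have eq_b1: "b1 = b1'"
    using eq_if_multiples_inner_eq_one[OF over(5,6)] pair(1,2) eq_A1 by simp
  have eq_A2: "A2 = A2'"
    using eq_if_multiples_inner_eq_one[OF over(1,3)] pair(3,4) eq_b1 by simp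
  have eq_b2: "b2 = b2'"
    using edges(1,3) eq_A1 eq_b1 eq_A2 by simp
  have eq_A3: "A3 = A3'"
    using eq_if_multiples_inner_eq_one[OF over(2,4)] pair(5,6) eq_b2 by simp
  show ?thesis
    using edges(2,4) eq_A1 eq_b1 eq_A2 eq_b2 eq_A3 by simp
qed

lemma exists_horizontal_first_edge:
  assumes nd: "nondegenerate P1 P2 P3 l1 l2 l3" and ins: "inscribed P1 P2 P3 l1 l2 l3"
  obtains A1 b1 A2 b2 where "lies_over A1 b1 P1 l1" and "lies_over A2 b2 P2 l2"
    and "horizontal_line (A1, b1) (A2, b2)"
proof -
  define \<alpha> \<beta> L K where "\<alpha> = l1 \<bullet> P1" and "\<beta> = l1 \<bullet> P2" and "L = l1 \<bullet> (l2 \<times> l3)"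
    and "K = (P1 \<times> P2) \<bullet> (l2 \<times> l3)"
  have nz: "\<alpha> \<noteq> 0" "\<beta> \<noteq> 0" "L \<noteq> 0" "K \<noteq> 0"
    using nd inscribed_nondegenerate_inner_nonzero[OF nd ins]
      inscribed_nondegenerate_cross_inner_nonzero[OF nd ins]
    unfolding \<alpha>_def \<beta>_def L_def K_def nondegenerate_iff by simp_all
  define c1 where "c1 = root 3 (- (\<beta> * L) / (\<alpha>\<^sup>2 * K))"
  have cubic: "c1 ^ 3 * (\<alpha>\<^sup>2 * K) = - (\<beta> * L)"
    using nz by (simp add: c1_def odd_real_root_pow)
  then have "c1 \<noteq> 0"
    using nz by auto
  define e1 c2 where "e1 = 1 / (c1 * \<alpha>)" and "c2 = c1 * \<alpha> / \<beta>"
  define A1 A2 b1 where "A1 = c1 *\<^sub>R P1" and "A2 = c2 *\<^sub>R P2" and "b1 = e1 *\<^sub>R l1"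
  define b2 where "b2 = b1 + A1 \<times> A2"
  have nz': "c2 \<noteq> 0" "e1 \<noteq> 0"
    using \<open>c1 \<noteq> 0\<close> nz by (simp_all add: c2_def e1_def)
  have b1A1: "b1 \<bullet> A1 = 1" and b1A2: "b1 \<bullet> A2 = 1"
    using \<open>c1 \<noteq> 0\<close> nz by (simp_all add: A1_def A2_def b1_def e1_def c2_def \<alpha>_def \<beta>_def)
  have cross_A: "A1 \<times> A2 = (c1 * c2) *\<^sub>R (P1 \<times> P2)"
    by (simp add: A1_def A2_def cross_mult_left cross_mult_right)
  have "b2 \<bullet> (l2 \<times> l3) = e1 * L + c1 * c2 * K"
    by (simp add: b2_def cross_A b1_def L_def K_def inner_add_left)
  also have "\<dots> = (\<beta> * L + c1 ^ 3 * (\<alpha>\<^sup>2 * K)) / (c1 * \<alpha> * \<beta>)"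
    using \<open>c1 \<noteq> 0\<close> nz by (simp add: e1_def c2_def field_simps power3_eq_cube power2_eq_square)
  also have "\<dots> = 0"
    using cubic by simp
  finally have "b2 \<bullet> (l2 \<times> l3) = 0" .
  moreover have "b2 \<bullet> (l1 \<times> l2) = 0"
    using ins by (simp add: b2_def cross_A b1_def inner_add_left inscribed_def on_line_def meet_def join_def)
  ultimately obtain t where b2_l2: "b2 = t *\<^sub>R l2"
    using nz(3) unfolding L_def by (metis parallel_if_orthogonal_crosses)
  have b2A2: "b2 \<bullet> A2 = 1"
    using b1A2 by (simp add: b2_def inner_add_left)
  then have "t \<noteq> 0"
    using b2_l2 by auto
  have "P1 \<times> P2 \<noteq> 0"
    using nd unfolding nondegenerate_iff by (metis cross_triple inner_commute inner_zero_left)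
  then have "A1 \<noteq> A2"
    using \<open>c1 \<noteq> 0\<close> nz' cross_A by auto
  show thesis
  proof (rule that)
    show "lies_over A1 b1 P1 l1"
      using b1A1 \<open>c1 \<noteq> 0\<close> nz' unfolding lies_over_def inQ_def A1_def b1_def by blast
    show "lies_over A2 b2 P2 l2"
      using b2A2 nz' \<open>t \<noteq> 0\<close> b2_l2 unfolding lies_over_def inQ_def A2_def by blast
    show "horizontal_line (A1, b1) (A2, b2)"
      using \<open>A1 \<noteq> A2\<close> b1A1 b1A2 unfolding horizontal_line_iff b2_def by simp
  qed
qed

lemma exists_horizontal_second_edge:
  assumes nd: "nondegenerate P1 P2 P3 l1 l2 l3" and ins: "inscribed P1 P2 P3 l1 l2 l3"
    and cr: "cr_equation P1 P2 P3 l1 l2 l3"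
    and over1: "lies_over A1 b1 P1 l1" and over2: "lies_over A2 b2 P2 l2"
    and h12: "horizontal_line (A1, b1) (A2, b2)"
  obtains A3 b3 where "lies_over A3 b3 P3 l3" and "horizontal_line (A2, b2) (A3, b3)"
proof -
  obtain c1 c2 e1 e2 where A1: "A1 = c1 *\<^sub>R P1" and A2: "A2 = c2 *\<^sub>R P2"
    and b1: "b1 = e1 *\<^sub>R l1" and b2: "b2 = e2 *\<^sub>R l2" and nz: "c1 \<noteq> 0" "c2 \<noteq> 0" "e1 \<noteq> 0" "e2 \<noteq> 0"
    using over1 over2 unfolding lies_over_def by blast
  have b1A1: "b1 \<bullet> A1 = 1" and b1A2: "b1 \<bullet> A2 = 1" and b2_eq: "b2 = b1 + A1 \<times> A2"
    using h12 unfolding horizontal_line_iff by blast+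
  have b2A2: "b2 \<bullet> A2 = 1"
    using over2 unfolding lies_over_def inQ_def by blast
  have b2P3: "b2 \<bullet> P3 \<noteq> 0" and l3A2: "l3 \<bullet> A2 \<noteq> 0"
    using inscribed_nondegenerate_inner_nonzero(3,4)[OF nd ins] nz by (simp_all add: b2 A2)
  define c3 f3 where "c3 = 1 / (b2 \<bullet> P3)" and "f3 = 1 / (l3 \<bullet> A2)"
  define A3 b3 where "A3 = c3 *\<^sub>R P3" and "b3 = f3 *\<^sub>R l3"
  have nz': "c3 \<noteq> 0" "f3 \<noteq> 0"
    using b2P3 l3A2 by (simp_all add: c3_def f3_def)
  have b2A3: "b2 \<bullet> A3 = 1" and b3A2: "b3 \<bullet> A2 = 1"
    using b2P3 l3A2 by (simp_all add: A3_def b3_def c3_def f3_def)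
  have "inscribed A1 A2 A3 b1 b2 b3" and cr': "cr_equation A1 A2 A3 b1 b2 b3"
    using ins cr nz nz' by (simp_all add: A1 A2 A3_def b1 b2 b3_def inscribed_scaleR cr_equation_scaleR)
  then have b3A3: "b3 \<bullet> A3 = 1"
    using b2A2 b2A3 b3A2 unfolding inscribed_def on_line_meet_join_iff by simp
  have det_nz: "A1 \<bullet> (A2 \<times> A3) \<noteq> 0"
    using nd nz nz' by (simp add: A1 A2 A3_def cross_mult_left cross_mult_right nondegenerate_iff)
  then have M_nz: "A2 \<times> A3 \<noteq> 0"
    by auto
  then obtain k where b3_eq: "b3 = b2 + k *\<^sub>R (A2 \<times> A3)"
    using b2A2 b2A3 b3A2 b3A3 by (rule normalized_covectors_differ_by_cross)
  have "k \<noteq> 0"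
  proof
    assume "k = 0"
    then have "l3 = (e2 / f3) *\<^sub>R l2"
      using b3_eq nz' by (simp add: b3_def b2 eq_vector_fraction_iff)
    then have "l1 \<bullet> (l2 \<times> l3) = 0"
      by (simp add: cross_mult_right)
    with nd show False
      unfolding nondegenerate_iff by simp
  qed
  with cr' det_nz have "k = 1"
    using cr_equation_scaled_second_edge_iff[OF b1A1 b1A2 b2_eq b2A3 b3_eq
        horizontal_line_cross_nonzero[OF h12] M_nz]
    by simp
  show thesis
  proof (rule that)
    show "lies_over A3 b3 P3 l3"
      using b3A3 nz' unfolding lies_over_def inQ_def A3_def b3_def by blast
    show "horizontal_line (A2, b2) (A3, b3)"
      using M_nz b2A2 b2A3 b3_eq \<open>k = 1\<close> unfolding horizontal_line_iff by auto
  qed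
qed

lemma ex1_horizontal_lift:
  assumes nd: "nondegenerate P1 P2 P3 l1 l2 l3" and ins: "inscribed P1 P2 P3 l1 l2 l3"
    and cr: "cr_equation P1 P2 P3 l1 l2 l3"
  shows "\<exists>!(A1, b1, A2, b2, A3, b3). horizontal_lift P1 P2 P3 l1 l2 l3 A1 b1 A2 b2 A3 b3"
proof -
  obtain A1 b1 A2 b2 where over1: "lies_over A1 b1 P1 l1" and over2: "lies_over A2 b2 P2 l2"
    and h12: "horizontal_line (A1, b1) (A2, b2)"
    using exists_horizontal_first_edge[OF nd ins] by blast
  obtain A3 b3 where "lies_over A3 b3 P3 l3" and "horizontal_line (A2, b2) (A3, b3)"
    using exists_horizontal_second_edge[OF nd ins cr over1 over2 h12] by blast
  with over1 over2 h12 have lift: "horizontal_lift P1 P2 P3 l1 l2 l3 A1 b1 A2 b2 A3 b3"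
    unfolding horizontal_lift_def by blast
  have nz: "l1 \<bullet> P2 \<noteq> 0" "l1 \<bullet> (l2 \<times> l3) \<noteq> 0"
    using nd inscribed_nondegenerate_inner_nonzero(1)[OF nd ins] unfolding nondegenerate_iff by simp_all
  show ?thesis
  proof (rule ex1I[of _ "(A1, b1, A2, b2, A3, b3)"])
    fix x
    assume "case x of (A1', b1', A2', b2', A3', b3') \<Rightarrow>
      horizontal_lift P1 P2 P3 l1 l2 l3 A1' b1' A2' b2' A3' b3'"
    then show "x = (A1, b1, A2, b2, A3, b3)"
      using horizontal_lift_unique[OF nz _ lift] by (cases x) auto
  qed (use lift in simp)
qed

theorem lemma2:
  shows "(\<forall>A1 b1 A2 b2 A3 b3 :: real^3.
            inQ A1 b1 \<and> inQ A2 b2 \<and> inQ A3 b3 \<and>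
            horizontal_line (A1, b1) (A2, b2) \<and> horizontal_line (A2, b2) (A3, b3) \<and>
            \<not> collinear {(A1, b1), (A2, b2), (A3, b3)}
            \<longrightarrow> inscribed A1 A2 A3 b1 b2 b3 \<and> cr_equation A1 A2 A3 b1 b2 b3)
       \<and> (\<forall>P1 P2 P3 l1 l2 l3 :: real^3.
            nondegenerate P1 P2 P3 l1 l2 l3 \<and> inscribed P1 P2 P3 l1 l2 l3 \<and>
            cr_equation P1 P2 P3 l1 l2 l3
            \<longrightarrow> (\<exists>!(A1, b1, A2, b2, A3, b3).
                   lies_over A1 b1 P1 l1 \<and> lies_over A2 b2 P2 l2 \<and> lies_over A3 b3 P3 l3 \<and>
                   horizontal_line (A1, b1) (A2, b2) \<and> horizontal_line (A2, b2) (A3, b3)))"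
proof (intro conjI allI impI)
  (* The inQ hypotheses follow from horizontality, which also forces A1 \<times> A2 \<noteq> 0 and
     A2 \<times> A3 \<noteq> 0. *)
  fix A1 b1 A2 b2 A3 b3 :: "real^3"
  assume "inQ A1 b1 \<and> inQ A2 b2 \<and> inQ A3 b3 \<and>
    horizontal_line (A1, b1) (A2, b2) \<and> horizontal_line (A2, b2) (A3, b3) \<and>
    \<not> collinear {(A1, b1), (A2, b2), (A3, b3)}"
  then show "inscribed A1 A2 A3 b1 b2 b3" and "cr_equation A1 A2 A3 b1 b2 b3"
    using inscribed_cr_equation_if_horizontal by blast+
next
  fix P1 P2 P3 l1 l2 l3 :: "real^3"
  assume "nondegenerate P1 P2 P3 l1 l2 l3 \<and> inscribed P1 P2 P3 l1 l2 l3 \<and>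
    cr_equation P1 P2 P3 l1 l2 l3"
  then show "\<exists>!(A1, b1, A2, b2, A3, b3).
    lies_over A1 b1 P1 l1 \<and> lies_over A2 b2 P2 l2 \<and> lies_over A3 b3 P3 l3 \<and>
    horizontal_line (A1, b1) (A2, b2) \<and> horizontal_line (A2, b2) (A3, b3)"
    using ex1_horizontal_lift unfolding horizontal_lift_def by blast
qed

end
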